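(* Let $G$ be one of the sequent calculi $\mathbf{GE},\mathbf{GM},\mathbf{GMC},\mathbf{GEN},\mathbf{GMN},\mathbf{GK},\mathbf{GEC},\mathbf{GECN},\mathbf{GCE},\mathbf{GCM},\mathbf{GCMC},\mathbf{GCEN},\mathbf{GCMN},\mathbf{GCK},\mathbf{GCKID},\mathbf{GCKCEM},\mathbf{GCKCEMID}$, and let $L=\{\phi : G\vdash\ \Rightarrow\phi\}$ be its logic. Then $G$ has ULIP iff $L$ has ULIP, and $G$ has UIP iff $L$ has UIP.
   Context: Languages: $\mathcal{L}_\Box$ (atoms, $\bot$, $\wedge,\vee,\to$, unary $\Box$) for the calculi whose name does not start with $\mathbf{GC}$, and $\mathcal{L}_\triangleright$ (atoms, $\bot$, $\wedge,\vee,\to$, binary $\triangleright$) otherwise. $\top:=\bot\to\bot$, $\neg A:=A\to\bot$. Positive/negative variables: $V^+(p)=\{p\}$, $V^-(p)=\varnothing$; $V^\pm(\bot)=\varnothing$; $V^\pm(\phi\odot\psi)=V^\pm(\phi)\cup V^\pm(\psi)$ for $\odot\in\{\wedge,\vee\}$; $V^+(\phi\to\psi)=V^-(\phi)\cup V^+(\psi)$, $V^-(\phi\to\psi)=V^+(\phi)\cup V^-(\psi)$; $V^\pm(\Box\phi)=V^\pm(\phi)$; $V^+(\phi\triangleright\psi)=V^-(\phi)\cup V^+(\psi)$, $V^-(\phi\triangleright\psi)=V^+(\phi)\cup V^-(\psi)$; $V=V^+\cup V^-$. $p^\circ$-free means $p\notin V^\circ$; $\diamond$ is the sign opposite to $\circ\in\{+,-\}$.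 Sequents $S=\Gamma\Rightarrow\Delta$ ($\Gamma,\Delta$ finite multisets); $V^+(S)=\bigcup_{\gamma\in\Gamma}V^-(\gamma)\cup\bigcup_{\delta\in\Delta}V^+(\delta)$, $V^-(S)=\bigcup_{\gamma\in\Gamma}V^+(\gamma)\cup\bigcup_{\delta\in\Delta}V^-(\delta)$; for $S=(\Gamma\Rightarrow\Delta)$, $T=(\Pi\Rightarrow\Lambda)$, $S\cdot T=(\Gamma,\Pi\Rightarrow\Delta,\Lambda)$. $G$ has ULIP if for every sequent $S$, atom $p$, $\circ\in\{+,-\}$ there is a $p^\circ$-free formula $\theta$ with $V^\dagger(\theta)\subseteq V^\dagger(S)$ for both $\dagger$, $G\vdash S\cdot(\theta\Rightarrow)$, and for every sequent $\Gamma\Rightarrow\Delta$ with $p\notin V^\diamond(\Gamma\Rightarrow\Delta)$, $G\vdash S\cdot(\Gamma\Rightarrow\Delta)$ implies $G\vdash\Gamma\Rightarrow\theta,\Delta$. UIP for $G$: same without polarities ($\theta$ $p$-free, $V(\theta)\subseteq V(S)$, $\Gamma\Rightarrow\Delta$ with $p\notin V(\Gamma\Rightarrow\Delta)$). ULIP for a logic $L$: for every formula $\phi$, atom $p$, $\circ$, there are $p^\circ$-free $\forall^\circ p\,\phi$, $\exists^\circ p\,\phi$ with $V^\dagger(\cdot)\subseteq V^\dagger(\phi)$ such that $L\vdash\forall^\circ p\,\phi\to\phi$; for $p^\circ$-free $\psi$, $L\vdash\psi\to\phi$ implies $L\vdash\psi\to\forall^\circ p\,\phi$; $L\vdash\phi\to\exists^\circ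 p\,\phi$; for $p^\circ$-free $\psi$, $L\vdash\phi\to\psi$ implies $L\vdash\exists^\circ p\,\phi\to\psi$. UIP for $L$: same without polarities. Calculi: $\mathbf{G3cp}$ has axioms $\Gamma,p\Rightarrow p,\Delta$ ($p$ atomic), $\Gamma,\bot\Rightarrow\Delta$ and the standard invertible context-sharing rules $L\wedge,R\wedge,L\vee,R\vee,L\to,R\to$ (e.g. $L\to$: from $\Gamma\Rightarrow\phi,\Delta$ and $\Gamma,\psi\Rightarrow\Delta$ infer $\Gamma,\phi\to\psi\Rightarrow\Delta$; $R\to$: from $\Gamma,\phi\Rightarrow\psi,\Delta$ infer $\Gamma\Rightarrow\phi\to\psi,\Delta$; $R\vee$: from $\Gamma\Rightarrow\phi,\psi,\Delta$ infer $\Gamma\Rightarrow\phi\vee\psi,\Delta$; $L\wedge$ dually; $R\wedge$, $L\vee$ two-premise). $\mathbf{G3W}=\mathbf{G3cp}$ plus left and right weakening. "$\alpha\Leftrightarrow\beta$" as a premise abbreviates $\alpha\Rightarrow\beta$ and $\beta\Rightarrow\alpha$. Modal rules: $(E)$ from $\phi\Leftrightarrow\psi$ infer $\Box\phi\Rightarrow\Box\psi$; $(M)$ from $\phi\Rightarrow\psi$ infer $\Box\phi\Rightarrow\Box\psi$; $(MC)$ ($n\ge1$) from $\phi_1,\dots,\phi_n\Rightarrow\psi$ infer $\Box\phi_1,\dots,\Box\phi_n\Rightarrow\Box\psi$; $(N)$ from $\Rightarrow\psi$ infer $\Rightarrow\Box\psi$; $(EC)$ ($n\ge1$) from $\phi_1,\dots,\phi_n\Rightarrow\psi$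 and $\psi\Rightarrow\phi_i$ ($1\le i\le n$) infer $\Sigma,\Box\phi_1,\dots,\Box\phi_n\Rightarrow\Box\psi,\Lambda$; $(NW)$ from $\Rightarrow\psi$ infer $\Sigma\Rightarrow\Box\psi,\Lambda$. $\mathbf{GE},\mathbf{GM},\mathbf{GMC}$ = $\mathbf{G3W}$ + $(E)$, $(M)$, $(MC)$; $\mathbf{GEN},\mathbf{GMN},\mathbf{GK}$ = these + $(N)$; $\mathbf{GEC}=\mathbf{G3cp}+(EC)$, $\mathbf{GECN}=\mathbf{GEC}+(NW)$. Conditional rules: $(CE)$ from $\phi_0\Leftrightarrow\phi_1$, $\psi_0\Leftrightarrow\psi_1$ infer $\phi_1\triangleright\psi_1\Rightarrow\phi_0\triangleright\psi_0$; $(CM)$ from $\phi_0\Leftrightarrow\phi_1$, $\psi_1\Rightarrow\psi_0$ infer the same; $(CMC)$ ($n\ge1$) from $\phi_0\Leftrightarrow\phi_i$ ($1\le i\le n$), $\psi_1,\dots,\psi_n\Rightarrow\psi_0$ infer $\phi_1\triangleright\psi_1,\dots,\phi_n\triangleright\psi_n\Rightarrow\phi_0\triangleright\psi_0$; $(CN)$ from $\Rightarrow\psi_0$ infer $\Rightarrow\phi_0\triangleright\psi_0$; $(CKID)$ ($I$ a possibly empty finite index multiset) from $\phi_0\Leftrightarrow\phi_i$ ($i\in I$), $\phi_0,\{\psi_i\}_{i\in I}\Rightarrow\psi_0$ infer $\{\phi_i\triangleright\psi_i\}_{i\in I}\Rightarrow\phi_0\triangleright\psi_0$; $(CKCEM)$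 from $\phi_0\Leftrightarrow\phi_r$ ($r\in I\cup J$), $\{\psi_i\}_{i\in I}\Rightarrow\psi_0,\{\psi_j\}_{j\in J}$ infer $\{\phi_i\triangleright\psi_i\}_{i\in I}\Rightarrow\phi_0\triangleright\psi_0,\{\phi_j\triangleright\psi_j\}_{j\in J}$; $(CKCEMID)$ as $(CKCEM)$ but with $\phi_0$ added to the antecedent of the last premise. $\mathbf{GCE},\mathbf{GCM},\mathbf{GCMC},\mathbf{GCKID},\mathbf{GCKCEM},\mathbf{GCKCEMID}$ = $\mathbf{G3W}$ + $(CE)$, $(CM)$, $(CMC)$, $(CKID)$, $(CKCEM)$, $(CKCEMID)$; $\mathbf{GCEN},\mathbf{GCMN},\mathbf{GCK}$ = $\mathbf{GCE},\mathbf{GCM},\mathbf{GCMC}$ + $(CN)$. Each $L$ so defined is a logic (contains classical tautologies, closed under substitution and modus ponens). *)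

theory Defs
  imports Main "HOL-Library.Multiset"
begin

text \<open>One datatype carrying both the unary modality Box and the binary conditional Cond;
  each calculus only uses the formulas of its own language (predicate inL).\<close>

datatype fm = Atom nat | Bot | FAnd fm fm | FOr fm fm | FImp fm fm | Box fm | Cond fm fm

datatype pol = Pos | Neg

fun opp :: "pol \<Rightarrow> pol" where
  "opp Pos = Neg" | "opp Neg = Pos"

fun pvars :: "pol \<Rightarrow> fm \<Rightarrow> nat set" where
  "pvars Pos (Atom p) = {p}"
| "pvars Neg (Atom p) = {}"
| "pvars s Bot = {}"
| "pvars s (FAnd a b) = pvars s a \<union> pvars s b"
| "pvars s (FOr a b) = pvars s a \<union> pvars s b"
| "pvars s (FImp a b) = pvars (opp s) a \<union> pvars s b"
| "pvars s (Box a) = pvars s a"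
| "pvars s (Cond a b) = pvars (opp s) a \<union> pvars s b"

definition allvars :: "fm \<Rightarrow> nat set" where
  "allvars a = pvars Pos a \<union> pvars Neg a"

type_synonym seq = "fm multiset \<times> fm multiset"

definition spvars :: "pol \<Rightarrow> seq \<Rightarrow> nat set" where
  "spvars s S = (\<Union>g\<in>set_mset (fst S). pvars (opp s) g) \<union> (\<Union>d\<in>set_mset (snd S). pvars s d)"

definition sallvars :: "seq \<Rightarrow> nat set" where
  "sallvars S = spvars Pos S \<union> spvars Neg S"

definition sdot :: "seq \<Rightarrow> seq \<Rightarrow> seq" where
  "sdot S T = (fst S + fst T, snd S + snd T)"

datatype calc = GE | GM | GMC | GEN | GMN | GK | GEC | GECN
  | GCE | GCM | GCMC | GCEN | GCMN | GCK | GCKID | GCKCEM | GCKCEMID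

definition is_cond_calc :: "calc \<Rightarrow> bool" where
  "is_cond_calc c \<longleftrightarrow> c \<in> {GCE, GCM, GCMC, GCEN, GCMN, GCK, GCKID, GCKCEM, GCKCEMID}"

fun inLang :: "bool \<Rightarrow> fm \<Rightarrow> bool" where
  "inLang b (Atom p) = True"
| "inLang b Bot = True"
| "inLang b (FAnd x y) = (inLang b x \<and> inLang b y)"
| "inLang b (FOr x y) = (inLang b x \<and> inLang b y)"
| "inLang b (FImp x y) = (inLang b x \<and> inLang b y)"
| "inLang b (Box x) = (\<not> b \<and> inLang b x)"
| "inLang b (Cond x y) = (b \<and> inLang b x \<and> inLang b y)"

definition inL :: "calc \<Rightarrow> fm \<Rightarrow> bool" where
  "inL c a = inLang (is_cond_calc c) a"

definition seqL :: "calc \<Rightarrow> seq \<Rightarrow> bool" where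
  "seqL c S \<longleftrightarrow> (\<forall>a\<in>set_mset (fst S) \<union> set_mset (snd S). inL c a)"

definition condf :: "fm \<times> fm \<Rightarrow> fm" where
  "condf x = Cond (fst x) (snd x)"

inductive deriv :: "calc \<Rightarrow> seq \<Rightarrow> bool" for c :: calc where
  ax_atom: "deriv c (\<Gamma> + {#Atom p#}, {#Atom p#} + \<Delta>)"
| ax_bot: "deriv c (\<Gamma> + {#Bot#}, \<Delta>)"
| L_and: "deriv c (\<Gamma> + {#a, b#}, \<Delta>) \<Longrightarrow> deriv c (\<Gamma> + {#FAnd a b#}, \<Delta>)"
| R_and: "deriv c (\<Gamma>, {#a#} + \<Delta>) \<Longrightarrow> deriv c (\<Gamma>, {#b#} + \<Delta>) \<Longrightarrow> deriv c (\<Gamma>, {#FAnd a b#} + \<Delta>)"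
| L_or: "deriv c (\<Gamma> + {#a#}, \<Delta>) \<Longrightarrow> deriv c (\<Gamma> + {#b#}, \<Delta>) \<Longrightarrow> deriv c (\<Gamma> + {#FOr a b#}, \<Delta>)"
| R_or: "deriv c (\<Gamma>, {#a, b#} + \<Delta>) \<Longrightarrow> deriv c (\<Gamma>, {#FOr a b#} + \<Delta>)"
| L_imp: "deriv c (\<Gamma>, {#a#} + \<Delta>) \<Longrightarrow> deriv c (\<Gamma> + {#b#}, \<Delta>) \<Longrightarrow> deriv c (\<Gamma> + {#FImp a b#}, \<Delta>)"
| R_imp: "deriv c (\<Gamma> + {#a#}, {#b#} + \<Delta>) \<Longrightarrow> deriv c (\<Gamma>, {#FImp a b#} + \<Delta>)"
| LW: "c \<notin> {GEC, GECN} \<Longrightarrow> deriv c (\<Gamma>, \<Delta>) \<Longrightarrow> deriv c (\<Gamma> + {#a#}, \<Delta>)"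
| RW: "c \<notin> {GEC, GECN} \<Longrightarrow> deriv c (\<Gamma>, \<Delta>) \<Longrightarrow> deriv c (\<Gamma>, {#a#} + \<Delta>)"
| rE: "c \<in> {GE, GEN} \<Longrightarrow> deriv c ({#a#}, {#b#}) \<Longrightarrow> deriv c ({#b#}, {#a#})
        \<Longrightarrow> deriv c ({#Box a#}, {#Box b#})"
| rM: "c \<in> {GM, GMN} \<Longrightarrow> deriv c ({#a#}, {#b#}) \<Longrightarrow> deriv c ({#Box a#}, {#Box b#})"
| rMC: "c \<in> {GMC, GK} \<Longrightarrow> phis \<noteq> [] \<Longrightarrow> deriv c (mset phis, {#b#})
        \<Longrightarrow> deriv c (mset (map Box phis), {#Box b#})"
| rN: "c \<in> {GEN, GMN, GK} \<Longrightarrow> deriv c ({#}, {#b#}) \<Longrightarrow> deriv c ({#}, {#Box b#})"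
| rEC: "c \<in> {GEC, GECN} \<Longrightarrow> phis \<noteq> [] \<Longrightarrow> deriv c (mset phis, {#b#})
        \<Longrightarrow> (\<forall>a\<in>set phis. deriv c ({#b#}, {#a#}))
        \<Longrightarrow> deriv c (\<Sigma> + mset (map Box phis), {#Box b#} + \<Lambda>)"
| rNW: "c = GECN \<Longrightarrow> deriv c ({#}, {#b#}) \<Longrightarrow> deriv c (\<Sigma>, {#Box b#} + \<Lambda>)"
| rCE: "c \<in> {GCE, GCEN} \<Longrightarrow> deriv c ({#a0#}, {#a1#}) \<Longrightarrow> deriv c ({#a1#}, {#a0#})
        \<Longrightarrow> deriv c ({#b0#}, {#b1#}) \<Longrightarrow> deriv c ({#b1#}, {#b0#})
        \<Longrightarrow> deriv c ({#Cond a1 b1#}, {#Cond a0 b0#})"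
| rCM: "c \<in> {GCM, GCMN} \<Longrightarrow> deriv c ({#a0#}, {#a1#}) \<Longrightarrow> deriv c ({#a1#}, {#a0#})
        \<Longrightarrow> deriv c ({#b1#}, {#b0#})
        \<Longrightarrow> deriv c ({#Cond a1 b1#}, {#Cond a0 b0#})"
| rCMC: "c \<in> {GCMC, GCK} \<Longrightarrow> ps \<noteq> []
        \<Longrightarrow> (\<forall>x\<in>set ps. deriv c ({#a0#}, {#fst x#}) \<and> deriv c ({#fst x#}, {#a0#}))
        \<Longrightarrow> deriv c (mset (map snd ps), {#b0#})
        \<Longrightarrow> deriv c (mset (map condf ps), {#Cond a0 b0#})"
| rCN: "c \<in> {GCEN, GCMN, GCK} \<Longrightarrow> deriv c ({#}, {#b0#}) \<Longrightarrow> deriv c ({#}, {#Cond a0 b0#})"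
| rCKID: "c = GCKID
        \<Longrightarrow> (\<forall>x\<in>set ps. deriv c ({#a0#}, {#fst x#}) \<and> deriv c ({#fst x#}, {#a0#}))
        \<Longrightarrow> deriv c ({#a0#} + mset (map snd ps), {#b0#})
        \<Longrightarrow> deriv c (mset (map condf ps), {#Cond a0 b0#})"
| rCKCEM: "c = GCKCEM
        \<Longrightarrow> (\<forall>x\<in>set (ps @ qs). deriv c ({#a0#}, {#fst x#}) \<and> deriv c ({#fst x#}, {#a0#}))
        \<Longrightarrow> deriv c (mset (map snd ps), {#b0#} + mset (map snd qs))
        \<Longrightarrow> deriv c (mset (map condf ps), {#Cond a0 b0#} + mset (map condf qs))"
| rCKCEMID: "c = GCKCEMID
        \<Longrightarrow> (\<forall>x\<in>set (ps @ qs). deriv c ({#a0#}, {#fst x#}) \<and> deriv c ({#fst x#}, {#a0#}))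
        \<Longrightarrow> deriv c ({#a0#} + mset (map snd ps), {#b0#} + mset (map snd qs))
        \<Longrightarrow> deriv c (mset (map condf ps), {#Cond a0 b0#} + mset (map condf qs))"

definition ULIP_calc :: "calc \<Rightarrow> bool" where
  "ULIP_calc c \<longleftrightarrow> (\<forall>S p s. seqL c S \<longrightarrow> (\<exists>\<theta>. inL c \<theta> \<and> p \<notin> pvars s \<theta>
     \<and> (\<forall>t. pvars t \<theta> \<subseteq> spvars t S)
     \<and> deriv c (sdot S ({#\<theta>#}, {#}))
     \<and> (\<forall>\<Gamma> \<Delta>. seqL c (\<Gamma>, \<Delta>) \<longrightarrow> p \<notin> spvars (opp s) (\<Gamma>, \<Delta>)
          \<longrightarrow> deriv c (sdot S (\<Gamma>, \<Delta>)) \<longrightarrow> deriv c (\<Gamma>, {#\<theta>#} + \<Delta>))))"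

definition UIP_calc :: "calc \<Rightarrow> bool" where
  "UIP_calc c \<longleftrightarrow> (\<forall>S p. seqL c S \<longrightarrow> (\<exists>\<theta>. inL c \<theta> \<and> p \<notin> allvars \<theta>
     \<and> allvars \<theta> \<subseteq> sallvars S
     \<and> deriv c (sdot S ({#\<theta>#}, {#}))
     \<and> (\<forall>\<Gamma> \<Delta>. seqL c (\<Gamma>, \<Delta>) \<longrightarrow> p \<notin> sallvars (\<Gamma>, \<Delta>)
          \<longrightarrow> deriv c (sdot S (\<Gamma>, \<Delta>)) \<longrightarrow> deriv c (\<Gamma>, {#\<theta>#} + \<Delta>))))"

definition logic :: "calc \<Rightarrow> fm set" where
  "logic c = {a. inL c a \<and> deriv c ({#}, {#a#})}"

definition ULIP_logic :: "calc \<Rightarrow> bool" where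
  "ULIP_logic c \<longleftrightarrow> (\<forall>\<phi> p s. inL c \<phi> \<longrightarrow> (\<exists>A E.
     inL c A \<and> inL c E \<and> p \<notin> pvars s A \<and> p \<notin> pvars s E
     \<and> (\<forall>t. pvars t A \<subseteq> pvars t \<phi>) \<and> (\<forall>t. pvars t E \<subseteq> pvars t \<phi>)
     \<and> FImp A \<phi> \<in> logic c
     \<and> (\<forall>\<psi>. inL c \<psi> \<longrightarrow> p \<notin> pvars s \<psi> \<longrightarrow> FImp \<psi> \<phi> \<in> logic c \<longrightarrow> FImp \<psi> A \<in> logic c)
     \<and> FImp \<phi> E \<in> logic c
     \<and> (\<forall>\<psi>. inL c \<psi> \<longrightarrow> p \<notin> pvars s \<psi> \<longrightarrow> FImp \<phi> \<psi> \<in> logic c \<longrightarrow> FImp E \<psi> \<in> logic c)))"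

definition UIP_logic :: "calc \<Rightarrow> bool" where
  "UIP_logic c \<longleftrightarrow> (\<forall>\<phi> p. inL c \<phi> \<longrightarrow> (\<exists>A E.
     inL c A \<and> inL c E \<and> p \<notin> allvars A \<and> p \<notin> allvars E
     \<and> allvars A \<subseteq> allvars \<phi> \<and> allvars E \<subseteq> allvars \<phi>
     \<and> FImp A \<phi> \<in> logic c
     \<and> (\<forall>\<psi>. inL c \<psi> \<longrightarrow> p \<notin> allvars \<psi> \<longrightarrow> FImp \<psi> \<phi> \<in> logic c \<longrightarrow> FImp \<psi> A \<in> logic c)
     \<and> FImp \<phi> E \<in> logic c
     \<and> (\<forall>\<psi>. inL c \<psi> \<longrightarrow> p \<notin> allvars \<psi> \<longrightarrow> FImp \<phi> \<psi> \<in> logic c \<longrightarrow> FImp E \<psi> \<in> logic c)))"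

end

theory Submission
  imports Defs
begin

text \<open>A sequent \<open>\<Gamma> \<Rightarrow> \<Delta>\<close> is represented by the formula \<open>\<Gamma> \<rightarrow> \<Or>\<Delta>\<close> (curried implication
  into a disjunction). In every calculus weakening is admissible and the right rules for \<open>\<rightarrow>\<close>,
  \<open>\<or>\<close> and \<open>\<bottom>\<close> as well as the left premise of \<open>L\<rightarrow>\<close> are invertible, so a sequent is derivable
  iff its formula is, and a side sequent can be moved to the antecedent as the negation of its
  formula. Hence the universal interpolant of the formula of \<open>S\<close> is an interpolant of \<open>S\<close>.
  Conversely the universal interpolant of \<open>\<phi>\<close> is the sequent interpolant of \<open>\<Rightarrow> \<phi>\<close>, and
  the existential one is the negation of the interpolant of \<open>\<phi> \<Rightarrow>\<close> for the dual occurrence.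
  The argument only uses how variable occurrences behave under \<open>\<bottom>\<close>, \<open>\<or>\<close> and \<open>\<rightarrow>\<close>, so ULIP
  (signed variables, duality flips the sign) and UIP (plain variables, duality is the identity)
  are treated at once.\<close>

lemma deriv_weaken_by_LW_RW:
  assumes "c \<notin> {GEC, GECN}" and "deriv c (\<Gamma>, \<Delta>)"
  shows "deriv c (\<Gamma> + A, \<Delta> + B)"
proof (induction A)
  case empty
  show ?case
  proof (induction B)
    case (add x B)
    then show ?case using deriv.RW[OF assms(1), of \<Gamma> "\<Delta> + B" x] by (simp add: ac_simps)
  qed (simp add: assms(2))
next
  case (add x A)
  then show ?case using deriv.LW[OF assms(1), of "\<Gamma> + A" "\<Delta> + B" x] by simp
qed

lemma deriv_weaken_GEC:
  assumes "deriv c S" and "c \<in> {GEC, GECN}"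
  shows "deriv c (fst S + A, snd S + B)"
  using assms
proof (induction rule: deriv.induct)
  case (ax_atom \<Gamma> p \<Delta>)
  show ?case using deriv.ax_atom[of c "\<Gamma> + A" p "\<Delta> + B"] by (simp add: ac_simps)
next
  case (ax_bot \<Gamma> \<Delta>)
  show ?case using deriv.ax_bot[of c "\<Gamma> + A" "\<Delta> + B"] by (simp add: ac_simps)
next
  case (L_and \<Gamma> a b \<Delta>)
  then show ?case using deriv.L_and[of c "\<Gamma> + A" a b "\<Delta> + B"] by (simp add: ac_simps)
next
  case (R_and \<Gamma> a \<Delta> b)
  then show ?case using deriv.R_and[of c "\<Gamma> + A" a "\<Delta> + B" b] by (simp add: ac_simps)
next
  case (L_or \<Gamma> a \<Delta> b)
  then show ?case using deriv.L_or[of c "\<Gamma> + A" a "\<Delta> + B" b] by (simp add: ac_simps)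
next
  case (R_or \<Gamma> a b \<Delta>)
  then show ?case using deriv.R_or[of c "\<Gamma> + A" a b "\<Delta> + B"] by (simp add: ac_simps)
next
  case (L_imp \<Gamma> a \<Delta> b)
  then show ?case using deriv.L_imp[of c "\<Gamma> + A" a "\<Delta> + B" b] by (simp add: ac_simps)
next
  case (R_imp \<Gamma> a b \<Delta>)
  then show ?case using deriv.R_imp[of c "\<Gamma> + A" a b "\<Delta> + B"] by (simp add: ac_simps)
next
  case (rEC phis b \<Sigma> \<Lambda>)
  then show ?case using deriv.rEC[of c phis b "\<Sigma> + A" "\<Lambda> + B"] by (simp add: ac_simps)
next
  case (rNW b \<Sigma> \<Lambda>)
  then show ?case using deriv.rNW[of c b "\<Sigma> + A" "\<Lambda> + B"] by (simp add: ac_simps)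
qed auto

lemma deriv_weaken: "deriv c (\<Gamma>, \<Delta>) \<Longrightarrow> deriv c (\<Gamma> + A, \<Delta> + B)"
  using deriv_weaken_by_LW_RW deriv_weaken_GEC[of c "(\<Gamma>, \<Delta>)"] by (cases "c \<in> {GEC, GECN}") auto

lemma image_mset_eq_add_msetD: "image_mset f A = add_mset x B \<Longrightarrow> x \<in> f ` set_mset A"
  by (metis set_image_mset union_single_eq_member add_mset_add_single)

fun right_inversion_premise :: "fm \<Rightarrow> seq option" where
  "right_inversion_premise Bot = Some ({#}, {#})"
| "right_inversion_premise (FOr a b) = Some ({#}, {#a, b#})"
| "right_inversion_premise (FImp a b) = Some ({#a#}, {#b#})"
| "right_inversion_premise _ = None"

lemma deriv_right_inversion:
  assumes "deriv c S" and "snd S = add_mset F D" and "right_inversion_premise F = Some P"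
  shows "deriv c (sdot P (fst S, D))"
proof -
  have not_principal: "Atom p \<noteq> F" "FAnd x y \<noteq> F" "Box x \<noteq> F" "Cond x y \<noteq> F" for p x y
    using assms(3) by auto
  have not_conditional: "image_mset condf Q \<noteq> add_mset F K" for Q K
    using not_principal(4) image_mset_eq_add_msetD[of condf Q F K] by (auto simp: condf_def)
  show ?thesis
    using assms(1,2)
  proof (induction arbitrary: D rule: deriv.induct)
    case (ax_atom \<Gamma> p \<Delta>)
    obtain C where "\<Delta> = add_mset F C" "D = add_mset (Atom p) C"
      using ax_atom.prems not_principal by (auto simp: add_eq_conv_ex)
    then show ?case using deriv.ax_atom[of c "fst P + \<Gamma>" p "snd P + C"] by (simp add: sdot_def ac_simps)
  next
    case (ax_bot \<Gamma> \<Delta>)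
    show ?case using deriv.ax_bot[of c "fst P + \<Gamma>" "snd P + D"] by (simp add: sdot_def ac_simps)
  next
    case (L_and \<Gamma> a b \<Delta>)
    then show ?case using deriv.L_and[of c "fst P + \<Gamma>" a b "snd P + D"] by (simp add: sdot_def ac_simps)
  next
    case (R_and \<Gamma> a \<Delta> b)
    obtain C where C: "\<Delta> = add_mset F C" "D = add_mset (FAnd a b) C"
      using R_and.prems not_principal by (auto simp: add_eq_conv_ex)
    then show ?case using R_and.IH(1)[of "add_mset a C"] R_and.IH(2)[of "add_mset b C"]
        deriv.R_and[of c "fst P + \<Gamma>" a "snd P + C" b] by (simp add: sdot_def ac_simps)
  next
    case (L_or \<Gamma> a \<Delta> b)
    then show ?case using deriv.L_or[of c "fst P + \<Gamma>" a "snd P + D" b] by (simp add: sdot_def ac_simps)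
  next
    case (R_or \<Gamma> a b \<Delta>)
    show ?case
    proof (cases "FOr a b = F \<and> \<Delta> = D")
      case True
      then show ?thesis using R_or.hyps assms(3) by (auto simp: sdot_def ac_simps)
    next
      case False
      obtain C where "\<Delta> = add_mset F C" "D = add_mset (FOr a b) C"
        using R_or.prems False by (auto simp: add_eq_conv_ex)
      then show ?thesis using R_or.IH[of "add_mset a (add_mset b C)"]
          deriv.R_or[of c "fst P + \<Gamma>" a b "snd P + C"] by (simp add: sdot_def ac_simps)
    qed
  next
    case (L_imp \<Gamma> a \<Delta> b)
    then show ?case using L_imp.IH(1)[of "add_mset a D"]
        deriv.L_imp[of c "fst P + \<Gamma>" a "snd P + D" b] by (simp add: sdot_def ac_simps)
  next
    case (R_imp \<Gamma> a b \<Delta>)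
    show ?case
    proof (cases "FImp a b = F \<and> \<Delta> = D")
      case True
      then show ?thesis using R_imp.hyps assms(3) by (auto simp: sdot_def ac_simps)
    next
      case False
      obtain C where "\<Delta> = add_mset F C" "D = add_mset (FImp a b) C"
        using R_imp.prems False by (auto simp: add_eq_conv_ex)
      then show ?thesis using R_imp.IH[of "add_mset b C"]
          deriv.R_imp[of c "fst P + \<Gamma>" a b "snd P + C"] by (simp add: sdot_def ac_simps)
    qed
  next
    case (LW \<Gamma> \<Delta> a)
    then show ?case using deriv.LW[of c "fst P + \<Gamma>" "snd P + D" a] by (simp add: sdot_def ac_simps)
  next
    case (RW \<Gamma> \<Delta> a)
    show ?case
    proof (cases "a = F \<and> \<Delta> = D")
      case True
      then show ?thesis using RW.hyps deriv_weaken_by_LW_RW[of c \<Gamma> \<Delta> "fst P" "snd P"] by (simp add: sdot_def ac_simps)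
    next
      case False
      obtain C where "\<Delta> = add_mset F C" "D = add_mset a C"
        using RW.prems False by (auto simp: add_eq_conv_ex)
      then show ?thesis using RW.IH[of C] RW.hyps
          deriv.RW[of c "fst P + \<Gamma>" "snd P + C" a] by (simp add: sdot_def ac_simps)
    qed
  next
    case (rEC phis b \<Sigma> \<Lambda>)
    obtain C where C: "\<Lambda> = add_mset F C" "D = add_mset (Box b) C"
      using rEC.prems not_principal by (auto simp: add_eq_conv_ex)
    have "deriv c ((fst P + \<Sigma>) + mset (map Box phis), {#Box b#} + (snd P + C))"
      by (rule deriv.rEC) (use rEC in auto)
    then show ?case using C by (simp add: sdot_def ac_simps)
  next
    case (rNW b \<Sigma> \<Lambda>)
    obtain C where "\<Lambda> = add_mset F C" "D = add_mset (Box b) C"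
      using rNW.prems not_principal by (auto simp: add_eq_conv_ex)
    then show ?case using rNW.hyps deriv.rNW[of c b "fst P + \<Sigma>" "snd P + C"] by (simp add: sdot_def ac_simps)
  qed (use not_principal not_conditional in \<open>auto simp: add_eq_conv_ex\<close>)
qed

lemma deriv_R_imp_iff: "deriv c (\<Gamma>, add_mset (FImp a b) \<Delta>) \<longleftrightarrow> deriv c (add_mset a \<Gamma>, add_mset b \<Delta>)"
  using deriv_right_inversion[of c "(\<Gamma>, add_mset (FImp a b) \<Delta>)" "FImp a b" \<Delta>]
    deriv.R_imp[of c \<Gamma> a b \<Delta>] by (auto simp: sdot_def)

lemma deriv_R_or_iff: "deriv c (\<Gamma>, add_mset (FOr a b) \<Delta>) \<longleftrightarrow> deriv c (\<Gamma>, add_mset a (add_mset b \<Delta>))"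
  using deriv_right_inversion[of c "(\<Gamma>, add_mset (FOr a b) \<Delta>)" "FOr a b" \<Delta>]
    deriv.R_or[of c \<Gamma> a b \<Delta>] by (auto simp: sdot_def)

lemma deriv_R_Bot_iff: "deriv c (\<Gamma>, add_mset Bot \<Delta>) \<longleftrightarrow> deriv c (\<Gamma>, \<Delta>)"
  using deriv_right_inversion[of c "(\<Gamma>, add_mset Bot \<Delta>)" Bot \<Delta>]
    deriv_weaken[of c \<Gamma> \<Delta> "{#}" "{#Bot#}"] by (auto simp: sdot_def)

lemma add_mset_eq_union_not_in:
  "add_mset x M = A + B \<Longrightarrow> x \<notin># B \<Longrightarrow> \<exists>C. A = add_mset x C \<and> M = C + B"
proof -
  assume eq: "add_mset x M = A + B" and x: "x \<notin># B"
  have "x \<in># A + B" unfolding eq[symmetric] by simp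
  with x have "x \<in># A" by simp
  then have A: "A = add_mset x (A - {#x#})" by simp
  with eq have "add_mset x M = add_mset x ((A - {#x#}) + B)" by simp
  then have "M = (A - {#x#}) + B" by simp
  with A show ?thesis by blast
qed

lemma deriv_L_imp_inversion:
  assumes "deriv c S" and "fst S = add_mset (FImp a b) \<Gamma>"
  shows "deriv c (\<Gamma>, add_mset a (snd S))"
  using assms
proof (induction arbitrary: \<Gamma> rule: deriv.induct)
  case (ax_atom \<Gamma>' p \<Delta>)
  obtain C where "\<Gamma>' = add_mset (FImp a b) C" "\<Gamma> = add_mset (Atom p) C"
    using ax_atom.prems by (auto simp: add_eq_conv_ex)
  then show ?case using deriv.ax_atom[of c C p "add_mset a \<Delta>"] by (simp add: add_mset_commute)
next
  case (ax_bot \<Gamma>' \<Delta>)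
  obtain C where "\<Gamma>' = add_mset (FImp a b) C" "\<Gamma> = add_mset Bot C"
    using ax_bot.prems by (auto simp: add_eq_conv_ex)
  then show ?case using deriv.ax_bot[of c C "add_mset a \<Delta>"] by (simp add: add_mset_commute)
next
  case (L_and \<Gamma>' x y \<Delta>)
  obtain C where "\<Gamma>' = add_mset (FImp a b) C" "\<Gamma> = add_mset (FAnd x y) C"
    using L_and.prems by (auto simp: add_eq_conv_ex)
  then show ?case using L_and.IH[of "add_mset x (add_mset y C)"]
      deriv.L_and[of c C x y "add_mset a \<Delta>"] by (simp add: add_mset_commute)
next
  case (R_and \<Gamma>' x \<Delta> y)
  show ?case using R_and.prems R_and.IH[of \<Gamma>] deriv.R_and[of c \<Gamma> x "add_mset a \<Delta>" y] by (simp add: add_mset_commute)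
next
  case (L_or \<Gamma>' x \<Delta> y)
  obtain C where "\<Gamma>' = add_mset (FImp a b) C" "\<Gamma> = add_mset (FOr x y) C"
    using L_or.prems by (auto simp: add_eq_conv_ex)
  then show ?case using L_or.IH(1)[of "add_mset x C"] L_or.IH(2)[of "add_mset y C"]
      deriv.L_or[of c C x "add_mset a \<Delta>" y] by (simp add: add_mset_commute)
next
  case (R_or \<Gamma>' x y \<Delta>)
  show ?case using R_or.prems R_or.IH[of \<Gamma>] deriv.R_or[of c \<Gamma> x y "add_mset a \<Delta>"] by (simp add: add_mset_commute)
next
  case (L_imp \<Gamma>' x \<Delta> y)
  show ?case
  proof (cases "FImp x y = FImp a b \<and> \<Gamma>' = \<Gamma>")
    case True
    then show ?thesis using L_imp.hyps by simp
  next
    case False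
    obtain C where "\<Gamma>' = add_mset (FImp a b) C" "\<Gamma> = add_mset (FImp x y) C"
      using L_imp.prems False by (auto simp: add_eq_conv_ex)
    then show ?thesis using L_imp.IH(1)[of C] L_imp.IH(2)[of "add_mset y C"]
        deriv.L_imp[of c C x "add_mset a \<Delta>" y] by (simp add: add_mset_commute)
  qed
next
  case (R_imp \<Gamma>' x y \<Delta>)
  show ?case using R_imp.prems R_imp.IH[of "add_mset x \<Gamma>"]
      deriv.R_imp[of c \<Gamma> x y "add_mset a \<Delta>"] by (simp add: add_mset_commute)
next
  case (LW \<Gamma>' \<Delta> x)
  show ?case
  proof (cases "x = FImp a b \<and> \<Gamma>' = \<Gamma>")
    case True
    then show ?thesis using LW.hyps deriv_weaken_by_LW_RW[of c \<Gamma> \<Delta> "{#}" "{#a#}"] by simp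
  next
    case False
    obtain C where "\<Gamma>' = add_mset (FImp a b) C" "\<Gamma> = add_mset x C"
      using LW.prems False by (auto simp: add_eq_conv_ex)
    then show ?thesis using LW.IH[of C] LW.hyps deriv.LW[of c C "add_mset a \<Delta>" x] by simp
  qed
next
  case (RW \<Gamma>' \<Delta> x)
  show ?case using RW.prems RW.hyps RW.IH[of \<Gamma>] deriv.RW[of c \<Gamma> "add_mset a \<Delta>" x] by (simp add: add_mset_commute)
next
  case (rEC phis y \<Sigma> \<Lambda>)
  obtain C where C: "\<Sigma> = add_mset (FImp a b) C" "\<Gamma> = C + mset (map Box phis)"
    using add_mset_eq_union_not_in[of "FImp a b" \<Gamma> \<Sigma> "mset (map Box phis)"] rEC.prems by auto
  have "deriv c (C + mset (map Box phis), {#Box y#} + add_mset a \<Lambda>)"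
    by (rule deriv.rEC) (use rEC in auto)
  then show ?case using C by (simp add: add_mset_commute)
next
  case (rNW y \<Sigma> \<Lambda>)
  then show ?case using deriv.rNW[of c y \<Gamma> "add_mset a \<Lambda>"] by (simp add: add_mset_commute)
qed (auto simp: condf_def dest!: image_mset_eq_add_msetD)

lemma deriv_L_neg_iff: "deriv c (add_mset (FImp a Bot) \<Gamma>, \<Delta>) \<longleftrightarrow> deriv c (\<Gamma>, add_mset a \<Delta>)"
  using deriv_L_imp_inversion[of c "(add_mset (FImp a Bot) \<Gamma>, \<Delta>)" a Bot \<Gamma>]
    deriv.L_imp[of c \<Gamma> a \<Delta> Bot] deriv.ax_bot[of c \<Gamma> \<Delta>] by auto

fun disjs :: "fm list \<Rightarrow> fm" where
  "disjs [] = Bot"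
| "disjs (d # ds) = FOr d (disjs ds)"

fun imps :: "fm list \<Rightarrow> fm \<Rightarrow> fm" where
  "imps [] r = r"
| "imps (g # gs) r = FImp g (imps gs r)"

definition sequent_formula :: "fm list \<Rightarrow> fm list \<Rightarrow> fm" where
  "sequent_formula gs ds = imps gs (disjs ds)"

lemma deriv_disjs_iff: "deriv c (\<Gamma>, add_mset (disjs ds) \<Delta>) \<longleftrightarrow> deriv c (\<Gamma>, mset ds + \<Delta>)"
proof (induction ds arbitrary: \<Delta>)
  case (Cons d ds)
  show ?case using Cons.IH[of "add_mset d \<Delta>"] by (simp add: deriv_R_or_iff add_mset_commute)
qed (simp add: deriv_R_Bot_iff)

lemma deriv_imps_iff: "deriv c (\<Gamma>, add_mset (imps gs r) \<Delta>) \<longleftrightarrow> deriv c (\<Gamma> + mset gs, add_mset r \<Delta>)"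
  by (induction gs arbitrary: \<Gamma>) (simp_all add: deriv_R_imp_iff)

lemma deriv_sequent_formula_iff:
  "deriv c (\<Gamma>, add_mset (sequent_formula gs ds) \<Delta>) \<longleftrightarrow> deriv c (\<Gamma> + mset gs, mset ds + \<Delta>)"
  by (simp add: sequent_formula_def deriv_imps_iff deriv_disjs_iff)

lemma inL_FImp [simp]: "inL c (FImp a b) \<longleftrightarrow> inL c a \<and> inL c b"
  and inL_FOr [simp]: "inL c (FOr a b) \<longleftrightarrow> inL c a \<and> inL c b"
  and inL_Bot [simp]: "inL c Bot"
  by (simp_all add: inL_def)

lemma inL_sequent_formula: "inL c (sequent_formula gs ds) \<longleftrightarrow> seqL c (mset gs, mset ds)"
proof -
  have "inL c (disjs ds) \<longleftrightarrow> (\<forall>d\<in>set ds. inL c d)" by (induction ds) auto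
  moreover have "inL c (imps gs r) \<longleftrightarrow> (\<forall>g\<in>set gs. inL c g) \<and> inL c r" for r
    by (induction gs) auto
  ultimately show ?thesis by (auto simp: sequent_formula_def seqL_def)
qed

lemma FImp_mem_logic_iff:
  "inL c a \<Longrightarrow> inL c b \<Longrightarrow> FImp a b \<in> logic c \<longleftrightarrow> deriv c ({#a#}, {#b#})"
  using deriv_R_imp_iff[of c "{#}" a b "{#}"] by (simp add: logic_def)

locale variable_occurrence =
  fixes occ :: "fm \<Rightarrow> 'v set" and dual :: "'v \<Rightarrow> 'v"
  assumes dual_dual [simp]: "dual (dual v) = v"
    and occ_Bot [simp]: "occ Bot = {}"
    and occ_FOr [simp]: "occ (FOr a b) = occ a \<union> occ b"
    and occ_FImp [simp]: "occ (FImp a b) = dual ` occ a \<union> occ b"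
begin

definition sequent_occ :: "seq \<Rightarrow> 'v set" where
  "sequent_occ S = (\<Union>a\<in>set_mset (fst S). dual ` occ a) \<union> (\<Union>b\<in>set_mset (snd S). occ b)"

definition sequent_interpolant :: "calc \<Rightarrow> 'v \<Rightarrow> seq \<Rightarrow> fm \<Rightarrow> bool" where
  "sequent_interpolant c v S \<theta> \<longleftrightarrow> inL c \<theta> \<and> v \<notin> occ \<theta> \<and> occ \<theta> \<subseteq> sequent_occ S
     \<and> deriv c (sdot S ({#\<theta>#}, {#}))
     \<and> (\<forall>\<Gamma> \<Delta>. seqL c (\<Gamma>, \<Delta>) \<longrightarrow> dual v \<notin> sequent_occ (\<Gamma>, \<Delta>)
          \<longrightarrow> deriv c (sdot S (\<Gamma>, \<Delta>)) \<longrightarrow> deriv c (\<Gamma>, {#\<theta>#} + \<Delta>))"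

definition forall_interpolant :: "calc \<Rightarrow> 'v \<Rightarrow> fm \<Rightarrow> fm \<Rightarrow> bool" where
  "forall_interpolant c v \<phi> A \<longleftrightarrow> inL c A \<and> v \<notin> occ A \<and> occ A \<subseteq> occ \<phi> \<and> FImp A \<phi> \<in> logic c
     \<and> (\<forall>\<psi>. inL c \<psi> \<longrightarrow> v \<notin> occ \<psi> \<longrightarrow> FImp \<psi> \<phi> \<in> logic c \<longrightarrow> FImp \<psi> A \<in> logic c)"

definition exists_interpolant :: "calc \<Rightarrow> 'v \<Rightarrow> fm \<Rightarrow> fm \<Rightarrow> bool" where
  "exists_interpolant c v \<phi> E \<longleftrightarrow> inL c E \<and> v \<notin> occ E \<and> occ E \<subseteq> occ \<phi> \<and> FImp \<phi> E \<in> logic c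
     \<and> (\<forall>\<psi>. inL c \<psi> \<longrightarrow> v \<notin> occ \<psi> \<longrightarrow> FImp \<phi> \<psi> \<in> logic c \<longrightarrow> FImp E \<psi> \<in> logic c)"

definition calc_interpolation :: "calc \<Rightarrow> 'v \<Rightarrow> bool" where
  "calc_interpolation c v \<longleftrightarrow> (\<forall>S. seqL c S \<longrightarrow> (\<exists>\<theta>. sequent_interpolant c v S \<theta>))"

definition logic_interpolation :: "calc \<Rightarrow> 'v \<Rightarrow> bool" where
  "logic_interpolation c v \<longleftrightarrow> (\<forall>\<phi>. inL c \<phi> \<longrightarrow>
     (\<exists>A. forall_interpolant c v \<phi> A) \<and> (\<exists>E. exists_interpolant c v \<phi> E))"

lemma mem_dual_image_iff [simp]: "v \<in> dual ` X \<longleftrightarrow> dual v \<in> X"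
  by force

lemma sequent_occ_single [simp]: "sequent_occ ({#a#}, {#}) = dual ` occ a" "sequent_occ ({#}, {#a#}) = occ a"
  by (simp_all add: sequent_occ_def)

lemma occ_sequent_formula: "occ (sequent_formula gs ds) = sequent_occ (mset gs, mset ds)"
proof -
  have "occ (disjs ds) = (\<Union>d\<in>set ds. occ d)" by (induction ds) auto
  moreover have "occ (imps gs r) = (\<Union>g\<in>set gs. dual ` occ g) \<union> occ r" for r
    by (induction gs) auto
  ultimately show ?thesis by (simp add: sequent_formula_def sequent_occ_def)
qed

lemma forall_interpolant_of_calc_interpolation:
  assumes "calc_interpolation c v" and "inL c \<phi>"
  obtains A where "forall_interpolant c v \<phi> A"
proof -
  have "seqL c ({#}, {#\<phi>#})" using assms(2) by (simp add: seqL_def)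
  then obtain A where A: "sequent_interpolant c v ({#}, {#\<phi>#}) A"
    using assms(1) unfolding calc_interpolation_def by blast
  have "forall_interpolant c v \<phi> A"
    unfolding forall_interpolant_def
  proof (intro conjI allI impI)
    show "inL c A" "v \<notin> occ A" "occ A \<subseteq> occ \<phi>" "FImp A \<phi> \<in> logic c"
      using A assms(2) by (simp_all add: sequent_interpolant_def FImp_mem_logic_iff sdot_def)
    show "FImp \<psi> A \<in> logic c" if "inL c \<psi>" "v \<notin> occ \<psi>" "FImp \<psi> \<phi> \<in> logic c" for \<psi>
      using A that assms(2) unfolding sequent_interpolant_def
      by (auto simp: FImp_mem_logic_iff sdot_def seqL_def)
  qed
  then show thesis by (rule that)
qed

lemma exists_interpolant_of_calc_interpolation:
  assumes "calc_interpolation c (dual v)" and "inL c \<phi>"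
  obtains E where "exists_interpolant c v \<phi> E"
proof -
  have "seqL c ({#\<phi>#}, {#})" using assms(2) by (simp add: seqL_def)
  then obtain B where B: "sequent_interpolant c (dual v) ({#\<phi>#}, {#}) B"
    using assms(1) unfolding calc_interpolation_def by blast
  have "exists_interpolant c v \<phi> (FImp B Bot)"
    unfolding exists_interpolant_def
  proof (intro conjI allI impI)
    show "inL c (FImp B Bot)" "v \<notin> occ (FImp B Bot)" "occ (FImp B Bot) \<subseteq> occ \<phi>"
      using B by (auto simp: sequent_interpolant_def)
    have "deriv c ({#B, \<phi>#}, {#})"
      using B by (simp add: sequent_interpolant_def sdot_def)
    then show "FImp \<phi> (FImp B Bot) \<in> logic c"
      using B assms(2) by (simp add: sequent_interpolant_def FImp_mem_logic_iff deriv_R_imp_iff deriv_R_Bot_iff)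
    show "FImp (FImp B Bot) \<psi> \<in> logic c" if "inL c \<psi>" "v \<notin> occ \<psi>" "FImp \<phi> \<psi> \<in> logic c" for \<psi>
    proof -
      have "deriv c ({#}, {#B, \<psi>#})"
        using B that assms(2) unfolding sequent_interpolant_def
        by (auto simp: FImp_mem_logic_iff sdot_def seqL_def)
      then show ?thesis
        using B that by (simp add: sequent_interpolant_def FImp_mem_logic_iff deriv_L_neg_iff)
    qed
  qed
  then show thesis by (rule that)
qed

lemma calc_interpolation_of_forall_interpolants:
  assumes forall: "\<And>\<phi>. inL c \<phi> \<Longrightarrow> \<exists>A. forall_interpolant c v \<phi> A"
  shows "calc_interpolation c v"
  unfolding calc_interpolation_def
proof (intro allI impI)
  fix S assume "seqL c S"
  obtain gs ds where S: "S = (mset gs, mset ds)" by (metis ex_mset prod.collapse)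
  define \<phi> where "\<phi> = sequent_formula gs ds"
  have \<phi>: "inL c \<phi>" using \<open>seqL c S\<close> by (simp add: S \<phi>_def inL_sequent_formula)
  then obtain A where A: "forall_interpolant c v \<phi> A" using forall by blast
  have "sequent_interpolant c v S A"
    unfolding sequent_interpolant_def
  proof (intro conjI allI impI)
    show "inL c A" "v \<notin> occ A" "occ A \<subseteq> sequent_occ S"
      using A by (auto simp: forall_interpolant_def S \<phi>_def occ_sequent_formula)
    have "deriv c ({#A#}, {#\<phi>#})"
      using A \<phi> by (auto simp: forall_interpolant_def FImp_mem_logic_iff)
    then show "deriv c (sdot S ({#A#}, {#}))"
      using deriv_sequent_formula_iff[of c "{#A#}" gs ds "{#}"] by (simp add: S \<phi>_def sdot_def add.commute)
    fix \<Gamma> \<Delta>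
    assume "seqL c (\<Gamma>, \<Delta>)" "dual v \<notin> sequent_occ (\<Gamma>, \<Delta>)" "deriv c (sdot S (\<Gamma>, \<Delta>))"
    obtain hs es where \<Gamma>\<Delta>: "\<Gamma> = mset hs" "\<Delta> = mset es" by (metis ex_mset)
    define \<psi> where "\<psi> = FImp (sequent_formula hs es) Bot"
    have \<psi>: "inL c \<psi>" "v \<notin> occ \<psi>"
      using \<open>seqL c (\<Gamma>, \<Delta>)\<close> \<open>dual v \<notin> sequent_occ (\<Gamma>, \<Delta>)\<close>
      by (simp_all add: \<psi>_def \<Gamma>\<Delta> inL_sequent_formula occ_sequent_formula)
    have "deriv c ({#\<psi>#}, {#\<phi>#})"
      using \<open>deriv c (sdot S (\<Gamma>, \<Delta>))\<close>
      by (simp add: \<psi>_def \<phi>_def S \<Gamma>\<Delta> sdot_def deriv_sequent_formula_iff deriv_L_neg_iff add.commute)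
    then have "deriv c ({#\<psi>#}, {#A#})"
      using A \<phi> \<psi> by (auto simp: forall_interpolant_def FImp_mem_logic_iff)
    then show "deriv c (\<Gamma>, {#A#} + \<Delta>)"
      by (simp add: \<psi>_def \<Gamma>\<Delta> deriv_L_neg_iff deriv_sequent_formula_iff)
  qed
  then show "\<exists>\<theta>. sequent_interpolant c v S \<theta>" ..
qed

theorem calc_interpolation_iff_logic_interpolation:
  "(\<forall>v. calc_interpolation c v) \<longleftrightarrow> (\<forall>v. logic_interpolation c v)"
  by (meson logic_interpolation_def calc_interpolation_of_forall_interpolants
      forall_interpolant_of_calc_interpolation exists_interpolant_of_calc_interpolation)

end

definition polarized_vars :: "fm \<Rightarrow> (pol \<times> nat) set" where
  "polarized_vars \<phi> = (SIGMA t:UNIV. pvars t \<phi>)"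

lemma opp_opp [simp]: "opp (opp t) = t"
  by (cases t) simp_all

lemma apfst_opp_image_Sigma: "apfst opp ` (SIGMA t:UNIV. X t) = (SIGMA t:UNIV. X (opp t))"
  by (force simp: image_iff)

lemma Sigma_UNIV_subset_iff: "(SIGMA t:UNIV. X t) \<subseteq> (SIGMA t:UNIV. Y t) \<longleftrightarrow> (\<forall>t. X t \<subseteq> Y t)"
  by blast

interpretation polarized: variable_occurrence polarized_vars "apfst opp"
  by unfold_locales (auto simp: polarized_vars_def apfst_opp_image_Sigma)

lemma polarized_sequent_occ: "polarized.sequent_occ S = (SIGMA t:UNIV. spvars t S)"
  by (auto simp: polarized.sequent_occ_def polarized_vars_def apfst_opp_image_Sigma spvars_def)

interpretation unpolarized: variable_occurrence allvars id
  by unfold_locales (auto simp: allvars_def)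

lemma unpolarized_sequent_occ: "unpolarized.sequent_occ S = sallvars S"
  by (auto simp: unpolarized.sequent_occ_def sallvars_def spvars_def allvars_def)

lemma ULIP_calc_iff: "ULIP_calc c \<longleftrightarrow> (\<forall>v. polarized.calc_interpolation c v)"
  by (auto simp: ULIP_calc_def polarized.calc_interpolation_def polarized.sequent_interpolant_def
      polarized_sequent_occ polarized_vars_def Sigma_UNIV_subset_iff)

lemma ULIP_logic_iff: "ULIP_logic c \<longleftrightarrow> (\<forall>v. polarized.logic_interpolation c v)"
  unfolding ULIP_logic_def polarized.logic_interpolation_def polarized.forall_interpolant_def
    polarized.exists_interpolant_def
  by (simp add: polarized_vars_def Sigma_UNIV_subset_iff split_paired_All) blast

lemma UIP_calc_iff: "UIP_calc c \<longleftrightarrow> (\<forall>v. unpolarized.calc_interpolation c v)"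
  by (auto simp: UIP_calc_def unpolarized.calc_interpolation_def unpolarized.sequent_interpolant_def
      unpolarized_sequent_occ)

lemma UIP_logic_iff: "UIP_logic c \<longleftrightarrow> (\<forall>v. unpolarized.logic_interpolation c v)"
  unfolding UIP_logic_def unpolarized.logic_interpolation_def unpolarized.forall_interpolant_def
    unpolarized.exists_interpolant_def
  by blast

theorem mainTheorem4:
  fixes G :: calc
  shows "(ULIP_calc G \<longleftrightarrow> ULIP_logic G) \<and> (UIP_calc G \<longleftrightarrow> UIP_logic G)"
  using polarized.calc_interpolation_iff_logic_interpolation
    unpolarized.calc_interpolation_iff_logic_interpolation
  by (simp add: ULIP_calc_iff ULIP_logic_iff UIP_calc_iff UIP_logic_iff)

end
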